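(* Let $d$ be a translation-invariant distance on $\mathbb R^2$ (i.e. $d(p+q,p+q')=d(q,q')$ for all $p,q,q'$) which induces the Euclidean topology, and let $d_E$ be the Euclidean distance. Then there exist a neighborhood $U$ of $0$ and a constant $C>0$ such that $d_E(p,0)\le C\, d(p,0)$ for all $p\in U$. *)

theory Defs
  imports "HOL-Analysis.Analysis"
begin

definition is_distance :: "('a \<Rightarrow> 'a \<Rightarrow> real) \<Rightarrow> bool" where
  "is_distance d \<longleftrightarrow>
     (\<forall>x y. d x y \<ge> 0) \<and> (\<forall>x y. d x y = 0 \<longleftrightarrow> x = y) \<and>
     (\<forall>x y. d x y = d y x) \<and> (\<forall>x y z. d x z \<le> d x y + d y z)"

definition d_open :: "('a \<Rightarrow> 'a \<Rightarrow> real) \<Rightarrow> 'a set \<Rightarrow> bool" where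
  "d_open d S \<longleftrightarrow> (\<forall>x\<in>S. \<exists>e>0. \<forall>y. d x y < e \<longrightarrow> y \<in> S)"

definition induces_euclidean_topology :: "('a::topological_space \<Rightarrow> 'a \<Rightarrow> real) \<Rightarrow> bool" where
  "induces_euclidean_topology d \<longleftrightarrow> (\<forall>S. d_open d S \<longleftrightarrow> open S)"

end

theory Submission
  imports Defs
begin

text \<open>
  Translation invariance and the triangle inequality give \<open>d 0 (n p) \<le> n d 0 p\<close>.
  If the \<open>d\<close>-ball of radius \<open>e\<close> at \<open>0\<close> lies in the unit ball and \<open>0 < \<bar>p\<bar> < 1\<close>,
  take \<open>n = \<lceil>1/\<bar>p\<bar>\<rceil>\<close>: then \<open>n p\<close> leaves the unit ball, so \<open>e \<le> d 0 (n p) \<le> n d 0 p\<close>,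
  while \<open>n \<bar>p\<bar> \<le> 2\<close>; hence \<open>\<bar>p\<bar> \<le> (2/e) d 0 p\<close>.
\<close>

lemma is_distance_self:
  assumes "is_distance d"
  shows "d x x = 0"
  using assms by (simp add: is_distance_def)

lemma is_distance_nonneg:
  assumes "is_distance d"
  shows "d x y \<ge> 0"
  using assms by (simp add: is_distance_def)

lemma is_distance_symmetric:
  assumes "is_distance d"
  shows "d x y = d y x"
  using assms by (simp add: is_distance_def)

lemma is_distance_triangle:
  assumes "is_distance d"
  shows "d x z \<le> d x y + d y z"
  using assms by (simp add: is_distance_def)

lemma translation_invariant_distance_scaleR_of_nat:
  fixes d :: "'a::real_vector \<Rightarrow> 'a \<Rightarrow> real"
  assumes "is_distance d"
    and translation: "\<And>p q q'. d (p + q) (p + q') = d q q'"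
  shows "d 0 (of_nat n *\<^sub>R p) \<le> of_nat n * d 0 p"
proof (induction n)
  case 0
  then show ?case using is_distance_self[OF assms(1)] by simp
next
  case (Suc n)
  have "d 0 (of_nat (Suc n) *\<^sub>R p) = d 0 (of_nat n *\<^sub>R p + p)"
    by (simp add: algebra_simps)
  also have "\<dots> \<le> d 0 (of_nat n *\<^sub>R p) + d (of_nat n *\<^sub>R p) (of_nat n *\<^sub>R p + p)"
    by (rule is_distance_triangle[OF assms(1)])
  also have "d (of_nat n *\<^sub>R p) (of_nat n *\<^sub>R p + p) = d 0 p"
    using translation[of "of_nat n *\<^sub>R p" 0 p] by simp
  finally show ?case using Suc by (simp add: algebra_simps)
qed

lemma norm_le_translation_invariant_distance:
  fixes d :: "'a::real_normed_vector \<Rightarrow> 'a \<Rightarrow> real"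
  assumes distance: "is_distance d"
    and translation: "\<And>p q q'. d (p + q) (p + q') = d q q'"
    and "e > 0"
    and small: "\<And>y. d 0 y < e \<Longrightarrow> norm y < 1"
    and "norm p < 1"
  shows "e * norm p \<le> 2 * d 0 p"
proof (cases "p = 0")
  case True
  then show ?thesis using is_distance_self[OF distance] by simp
next
  case False
  define r where "r = norm p"
  have r: "0 < r" "r < 1" using False \<open>norm p < 1\<close> by (auto simp: r_def)
  define n where "n = nat \<lceil>1 / r\<rceil>"
  have "of_nat n = real_of_int \<lceil>1 / r\<rceil>"
    using r by (simp add: n_def)
  then have "1 / r \<le> of_nat n" "of_nat n < 1 / r + 1"
    using ceiling_correct[of "1 / r"] by linarith+
  then have lower: "1 \<le> of_nat n * r" and upper: "of_nat n * r \<le> 2"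
    using r by (auto simp: field_simps)
  have "norm (of_nat n *\<^sub>R p) \<ge> 1"
    using lower r by (simp add: r_def)
  then have "e \<le> d 0 (of_nat n *\<^sub>R p)"
    using small[of "of_nat n *\<^sub>R p"] by linarith
  also have "\<dots> \<le> of_nat n * d 0 p"
    by (rule translation_invariant_distance_scaleR_of_nat[OF distance translation])
  finally have "e * r \<le> (of_nat n * r) * d 0 p"
    using r by (simp add: mult_right_mono mult.commute mult.left_commute)
  also have "\<dots> \<le> 2 * d 0 p"
    using upper is_distance_nonneg[OF distance] by (intro mult_right_mono) auto
  finally show ?thesis by (simp add: r_def)
qed

lemma translation_invariant_distance_dominates_norm:
  fixes d :: "'a::real_normed_vector \<Rightarrow> 'a \<Rightarrow> real"
  assumes distance: "is_distance d"
    and translation: "\<And>p q q'. d (p + q) (p + q') = d q q'"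
    and "induces_euclidean_topology d"
  shows "\<exists>U C. open U \<and> 0 \<in> U \<and> C > 0 \<and> (\<forall>p\<in>U. dist p 0 \<le> C * d p 0)"
proof -
  have "d_open d (ball 0 1)"
    using assms(3) by (simp add: induces_euclidean_topology_def)
  then obtain e where "e > 0" and "\<forall>y. d 0 y < e \<longrightarrow> y \<in> ball 0 1"
    unfolding d_open_def by (meson centre_in_ball zero_less_one)
  then have small: "\<And>y. d 0 y < e \<Longrightarrow> norm y < 1"
    by simp
  have "dist p 0 \<le> (2 / e) * d p 0" if "p \<in> ball 0 1" for p
  proof -
    have "e * norm p \<le> 2 * d 0 p"
      using norm_le_translation_invariant_distance[OF distance translation \<open>e > 0\<close> small] that
      by simp
    then show ?thesis
      using \<open>e > 0\<close> is_distance_symmetric[OF distance, of p 0]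
      by (simp add: dist_norm field_simps)
  qed
  with \<open>e > 0\<close> show ?thesis
    by (intro exI[of _ "ball 0 1"] exI[of _ "2 / e"]) auto
qed

theorem mainTheorem9:
  fixes d :: "real^2 \<Rightarrow> real^2 \<Rightarrow> real"
  assumes "is_distance d"
    and "\<And>p q q'. d (p + q) (p + q') = d q q'"
    and "induces_euclidean_topology d"
  shows "\<exists>U C. open U \<and> 0 \<in> U \<and> C > 0 \<and> (\<forall>p\<in>U. dist p 0 \<le> C * d p 0)"
  by (rule translation_invariant_distance_dominates_norm[OF assms])

end
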